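(* Let $\kappa$ be a kernel and $\delta>0$. There is $\gamma>0$ such that, for every sequence $(A_n)$ of non-negative symmetric $n\times n$ matrices with $\delta_\square(A_n,\kappa)\to0$, with high probability every set of at most $\gamma n$ vertices of $G(A_n)$ meets at most $\delta n$ edges.
   Context: A kernel is an integrable symmetric measurable $\kappa:[0,1]^2\to[0,\infty)$ (Lebesgue measure). For $A_n=(a_{ij})$, $\kappa_{A_n}$ equals $a_{ij}$ on $((i-1)/n,i/n]\times((j-1)/n,j/n]$. Cut norm $\|W\|_\square=\sup_{S,T}|\int_{S\times T}W|$; $\delta_\square(A_n,\kappa)=\inf_\tau\|\kappa_{A_n}-\kappa^\tau\|_\square$ over measure-preserving bijections $\tau$ of $[0,1]$. $G(A_n)$: random graph on $[n]$, independent edges, $ij$ present with probability $\min\{a_{ij}/n,1\}$. A vertex set meets an edge if it contains at least one endpoint of it. *)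

theory Defs
  imports "HOL-Probability.Probability"
begin

text \<open>A kernel: integrable, symmetric, non-negative, measurable on the unit square.
  Kernels are functions real => real => real; only values on [0,1]^2 matter.\<close>
definition is_kernel :: "(real \<Rightarrow> real \<Rightarrow> real) \<Rightarrow> bool" where
  "is_kernel \<kappa> \<longleftrightarrow>
     set_integrable lborel ({0..1} \<times> {0..1}) (\<lambda>(x, y). \<kappa> x y) \<and>
     (\<forall>x\<in>{0..1}. \<forall>y\<in>{0..1}. \<kappa> x y = \<kappa> y x \<and> 0 \<le> \<kappa> x y)"

definition unit_interval :: "real measure" where
  "unit_interval = restrict_space lborel {0..1}"

definition measure_preserving :: "'a measure \<Rightarrow> 'b measure \<Rightarrow> ('a \<Rightarrow> 'b) set" where
  "measure_preserving M N = {f \<in> M \<rightarrow>\<^sub>M N. \<forall>B\<in>sets N. emeasure M (f -` B \<inter> space M) = emeasure N B}"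

definition mp_bij :: "(real \<Rightarrow> real) \<Rightarrow> bool" where
  "mp_bij \<tau> \<longleftrightarrow> bij_betw \<tau> {0..1} {0..1} \<and>
     \<tau> \<in> measure_preserving unit_interval unit_interval \<and>
     inv_into {0..1} \<tau> \<in> measure_preserving unit_interval unit_interval"

definition cut_norm :: "(real \<Rightarrow> real \<Rightarrow> real) \<Rightarrow> real" where
  "cut_norm W = Sup {\<bar>set_lebesgue_integral lborel (S \<times> T) (\<lambda>(x, y). W x y)\<bar> | S T.
      S \<in> sets lborel \<and> T \<in> sets lborel \<and> S \<subseteq> {0..1} \<and> T \<subseteq> {0..1}}"

text \<open>Step kernel of an n x n matrix A (indices 1..n): value A i j on
  ((i-1)/n, i/n] x ((j-1)/n, j/n], and 0 off (0,1]^2.\<close>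
definition step_kernel :: "nat \<Rightarrow> (nat \<Rightarrow> nat \<Rightarrow> real) \<Rightarrow> real \<Rightarrow> real \<Rightarrow> real" where
  "step_kernel n A x y =
     (if 0 < x \<and> x \<le> 1 \<and> 0 < y \<and> y \<le> 1
      then A (nat \<lceil>real n * x\<rceil>) (nat \<lceil>real n * y\<rceil>) else 0)"

definition cut_dist :: "nat \<Rightarrow> (nat \<Rightarrow> nat \<Rightarrow> real) \<Rightarrow> (real \<Rightarrow> real \<Rightarrow> real) \<Rightarrow> real" where
  "cut_dist n A \<kappa> = Inf {cut_norm (\<lambda>x y. step_kernel n A x y - \<kappa> (\<tau> x) (\<tau> y)) | \<tau>. mp_bij \<tau>}"

definition vpairs :: "nat \<Rightarrow> (nat \<times> nat) set" where
  "vpairs n = {(i, j). 1 \<le> i \<and> i < j \<and> j \<le> n}"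

text \<open>The random graph G(A): independent edges, ij present w.p. min(a_ij/n, 1).
  A graph is given by its edge indicator on vpairs n (False elsewhere).\<close>
definition rand_graph :: "nat \<Rightarrow> (nat \<Rightarrow> nat \<Rightarrow> real) \<Rightarrow> (nat \<times> nat \<Rightarrow> bool) pmf" where
  "rand_graph n A = Pi_pmf (vpairs n) False
      (\<lambda>(i, j). bernoulli_pmf (min (A i j / real n) 1))"

definition edges_met :: "nat \<Rightarrow> (nat \<times> nat \<Rightarrow> bool) \<Rightarrow> nat set \<Rightarrow> nat" where
  "edges_met n e S = card {(i, j) \<in> vpairs n. e (i, j) \<and> (i \<in> S \<or> j \<in> S)}"

end

theory Submission
  imports Defs "HOL-Real_Asymp.Real_Asymp"
begin

(* Fix a level M so that the part of the kernel above M has integral < delta/12.  For a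
   vertex set S of size <= gamma n, the expected number of edges of G(A_n) met by S is at most the
   row sums of S divided by n, and these row sums are n^2 times the integral of the step kernel
   over the strip (S-cells) x (0,1].  That integral is at most the cut distance (the strip is a
   rectangle) plus the integral of the relabelled kernel over the strip, which is <= M |S|/n plus
   the tail above M.  So the expected count is <= delta n / 4, and a Chernoff bound gives
   probability <= exp (- delta n / 2) of meeting more than delta n edges; a union bound over the
   at most exp (delta n / 4) small sets finishes the proof. *)


definition cell :: "nat \<Rightarrow> nat \<Rightarrow> real set" where
  "cell n i = {(real i - 1) / real n <.. real i / real n}"

definition cells :: "nat \<Rightarrow> nat set \<Rightarrow> real set" where
  "cells n S = (\<Union>i\<in>S. cell n i)"

(* The horizontal strip of the unit square belonging to S; integrating a step kernel over it
   sums the rows of the matrix indexed by S. *)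
definition strip :: "nat \<Rightarrow> nat set \<Rightarrow> (real \<times> real) set" where
  "strip n S = cells n S \<times> {0<..1}"

(* The block function with value f i j on cell i x cell j (i in S, j in [n]); step kernels and
   indicators of strips are of this form, which makes their integrals finite sums. *)
definition block_fun :: "nat \<Rightarrow> nat set \<Rightarrow> (nat \<Rightarrow> nat \<Rightarrow> real) \<Rightarrow> real \<times> real \<Rightarrow> real" where
  "block_fun n S f z = (\<Sum>i\<in>S. \<Sum>j\<in>{1..n}. f i j * indicator (cell n i \<times> cell n j) z)"

lemma cell_index_range:
  assumes "n > 0" "0 < x" "x \<le> 1"
  shows "nat \<lceil>real n * x\<rceil> \<in> {1..n}"
proof -
  have "0 < real n * x" "real n * x \<le> real n"
    using assms by (auto intro: mult_left_le)
  thus ?thesis by (auto simp: le_nat_iff)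
qed

lemma in_cell_iff:
  assumes "n > 0" "i \<in> {1..n}"
  shows "x \<in> cell n i \<longleftrightarrow> 0 < x \<and> x \<le> 1 \<and> nat \<lceil>real n * x\<rceil> = i"
proof -
  have "x \<in> cell n i \<longleftrightarrow> real i - 1 < real n * x \<and> real n * x \<le> real i"
    using assms by (auto simp: cell_def field_simps)
  also have "\<dots> \<longleftrightarrow> \<lceil>real n * x\<rceil> = int i"
    by (simp add: ceiling_eq_iff)
  also have "\<dots> \<longleftrightarrow> 0 < x \<and> x \<le> 1 \<and> nat \<lceil>real n * x\<rceil> = i"
  proof
    assume c: "\<lceil>real n * x\<rceil> = int i"
    hence "real i - 1 < real n * x" "real n * x \<le> real i"
      by (auto simp: ceiling_eq_iff)
    moreover have "real i \<le> real n" "1 \<le> real i" using assms(2) by auto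
    ultimately have "0 < real n * x" "real n * x \<le> real n" by linarith+
    hence "0 < x" "x \<le> 1" using assms by (auto simp: mult_le_cancel_left1 zero_less_mult_iff)
    with c show "0 < x \<and> x \<le> 1 \<and> nat \<lceil>real n * x\<rceil> = i" by simp
  next
    assume "0 < x \<and> x \<le> 1 \<and> nat \<lceil>real n * x\<rceil> = i"
    thus "\<lceil>real n * x\<rceil> = int i" using cell_index_range[OF assms(1)] by force
  qed
  finally show ?thesis .
qed

lemma in_cells_iff:
  assumes "n > 0" "S \<subseteq> {1..n}"
  shows "x \<in> cells n S \<longleftrightarrow> 0 < x \<and> x \<le> 1 \<and> nat \<lceil>real n * x\<rceil> \<in> S"
proof -
  have "x \<in> cells n S \<longleftrightarrow> (\<exists>i\<in>S. 0 < x \<and> x \<le> 1 \<and> nat \<lceil>real n * x\<rceil> = i)"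
    unfolding cells_def using assms by (auto simp: in_cell_iff[OF assms(1)] subset_iff)
  thus ?thesis by auto
qed

lemma block_fun_eval:
  assumes n: "n > 0" and S: "S \<subseteq> {1..n}"
  shows "block_fun n S f (x, y) =
    (if 0 < x \<and> x \<le> 1 \<and> 0 < y \<and> y \<le> 1 \<and> nat \<lceil>real n * x\<rceil> \<in> S
     then f (nat \<lceil>real n * x\<rceil>) (nat \<lceil>real n * y\<rceil>) else 0)"
proof (cases "0 < x \<and> x \<le> 1 \<and> 0 < y \<and> y \<le> 1")
  case True
  define cx cy where "cx = nat \<lceil>real n * x\<rceil>" and "cy = nat \<lceil>real n * y\<rceil>"
  have cy: "cy \<in> {1..n}" using cell_index_range[OF n] True by (simp add: cy_def)
  have "block_fun n S f (x, y) = (\<Sum>i\<in>S. \<Sum>j\<in>{1..n}. if i = cx \<and> j = cy then f i j else 0)"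
    unfolding block_fun_def using S True
    by (intro sum.cong refl) (auto simp: indicator_def in_cell_iff[OF n] cx_def cy_def)
  also have "\<dots> = (\<Sum>i\<in>S. if i = cx then f i cy else 0)"
    using cy by (intro sum.cong refl) (auto simp: sum.delta)
  also have "\<dots> = (if cx \<in> S then f cx cy else 0)"
    using finite_subset[OF S] by (simp add: sum.delta)
  finally show ?thesis using True by (simp add: cx_def cy_def)
next
  case False
  hence "indicator (cell n i \<times> cell n j) (x, y) = (0 :: real)" if "i \<in> S" "j \<in> {1..n}" for i j
    using that S by (auto simp: indicator_def in_cell_iff[OF n])
  hence "block_fun n S f (x, y) = 0" by (simp add: block_fun_def)
  thus ?thesis using False by auto
qed

lemma step_kernel_block_fun:
  "n > 0 \<Longrightarrow> step_kernel n A x y = block_fun n {1..n} A (x, y)"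
  using cell_index_range[of n x] by (simp add: block_fun_eval step_kernel_def)

lemma step_kernel_on_strip:
  assumes "n > 0" "S \<subseteq> {1..n}"
  shows "indicator (strip n S) z * step_kernel n A (fst z) (snd z) = block_fun n S A z"
  by (cases z) (auto simp: strip_def block_fun_eval[OF assms] in_cells_iff[OF assms] indicator_def step_kernel_def)

lemma indicator_strip:
  assumes "n > 0" "S \<subseteq> {1..n}"
  shows "indicator (strip n S) = block_fun n S (\<lambda>_ _. 1)"
  by (auto simp: fun_eq_iff strip_def block_fun_eval[OF assms] in_cells_iff[OF assms] indicator_def)

lemma cell_sets [measurable]: "cell n i \<in> sets borel"
  by (simp add: cell_def)

lemma cells_sets [measurable]: "finite S \<Longrightarrow> cells n S \<in> sets borel"
  unfolding cells_def by (intro sets.finite_UN) auto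

lemma emeasure_cell_Times:
  assumes "n > 0"
  shows "emeasure (lborel :: (real \<times> real) measure) (cell n i \<times> cell n j) = ennreal (1 / real n ^ 2)"
proof -
  have "emeasure (lborel :: (real \<times> real) measure) (cell n i \<times> cell n j)
      = emeasure lborel (cell n i) * emeasure lborel (cell n j)"
    unfolding lborel_prod[symmetric] by (intro lborel.emeasure_pair_measure_Times) auto
  also have "\<dots> = ennreal (1 / real n ^ 2)" using assms
    by (simp add: cell_def diff_divide_distrib ennreal_mult[symmetric] power2_eq_square)
  finally show ?thesis .
qed

lemma integrable_block_fun: "n > 0 \<Longrightarrow> integrable lborel (block_fun n S f)"
  unfolding block_fun_def[abs_def]
  by (intro Bochner_Integration.integrable_sum integrable_mult_right integrable_real_indicator)
     (auto simp: emeasure_cell_Times intro: borel_Times)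

lemma integral_block_fun:
  assumes "n > 0"
  shows "integral\<^sup>L lborel (block_fun n S f) = (\<Sum>i\<in>S. \<Sum>j\<in>{1..n}. f i j) / real n ^ 2"
proof -
  have int_ind: "integrable lborel (indicator (cell n i \<times> cell n j) :: _ \<Rightarrow> real)" for i j
    using assms by (intro integrable_real_indicator) (auto simp: emeasure_cell_Times intro: borel_Times)
  hence int: "integrable lborel (\<lambda>z. f i j * indicator (cell n i \<times> cell n j) z :: real)" for i j
    by simp
  have meas: "measure lborel (cell n i \<times> cell n j) = 1 / real n ^ 2" for i j
    using emeasure_cell_Times[OF assms, of i j] by (simp add: measure_def)
  have "integral\<^sup>L lborel (block_fun n S f)
      = (\<Sum>i\<in>S. integral\<^sup>L lborel (\<lambda>z. \<Sum>j\<in>{1..n}. f i j * indicator (cell n i \<times> cell n j) z))"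
    unfolding block_fun_def[abs_def]
    by (intro Bochner_Integration.integral_sum Bochner_Integration.integrable_sum int)
  also have "\<dots> = (\<Sum>i\<in>S. \<Sum>j\<in>{1..n}. f i j * measure lborel (cell n i \<times> cell n j))"
    by (intro sum.cong refl) (subst Bochner_Integration.integral_sum, simp_all add: int_ind)
  finally show ?thesis by (simp add: meas sum_divide_distrib)
qed

lemma cells_subset_unit:
  assumes "n > 0" "S \<subseteq> {1..n}"
  shows "cells n S \<subseteq> {0..1}"
  using in_cells_iff[OF assms] by (meson atLeastAtMost_iff less_eq_real_def subsetI)

lemma strip_sets [measurable]: "finite S \<Longrightarrow> strip n S \<in> sets borel"
  unfolding strip_def by (intro borel_Times) auto

lemma integrable_indicator_strip:
  "n > 0 \<Longrightarrow> S \<subseteq> {1..n} \<Longrightarrow> integrable lborel (indicator (strip n S) :: _ \<Rightarrow> real)"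
  by (simp add: indicator_strip integrable_block_fun)

lemma integral_indicator_strip:
  "n > 0 \<Longrightarrow> S \<subseteq> {1..n} \<Longrightarrow> integral\<^sup>L lborel (indicator (strip n S)) = real (card S) / real n"
  by (simp add: indicator_strip integral_block_fun power2_eq_square)

lemma integral_step_kernel_on_strip:
  assumes "n > 0" "S \<subseteq> {1..n}"
  shows "integral\<^sup>L lborel (\<lambda>z. indicator (strip n S) z * step_kernel n A (fst z) (snd z))
    = (\<Sum>i\<in>S. \<Sum>j\<in>{1..n}. A i j) / real n ^ 2"
  by (simp add: step_kernel_on_strip[OF assms] integral_block_fun[OF assms(1)])

(* Measure preservation of the relabelling is all that is used
   of the bijections in the definition of the cut distance. *)
definition ext_unit :: "(real \<Rightarrow> real) \<Rightarrow> real \<Rightarrow> real" where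
  "ext_unit \<tau> x = (if x \<in> {0..1} then \<tau> x else x)"

definition relabel :: "(real \<Rightarrow> real) \<Rightarrow> real \<times> real \<Rightarrow> real \<times> real" where
  "relabel \<tau> = (\<lambda>(x, y). (ext_unit \<tau> x, ext_unit \<tau> y))"

lemma sets_unit_interval: "A \<in> sets unit_interval \<longleftrightarrow> A \<subseteq> {0..1} \<and> A \<in> sets borel"
  unfolding unit_interval_def by (simp add: sets_restrict_space_iff)

lemma measure_preserving_range:
  "\<tau> \<in> measure_preserving unit_interval unit_interval \<Longrightarrow> x \<in> {0..1} \<Longrightarrow> \<tau> x \<in> {0..1}"
  using measurable_space[of \<tau> unit_interval unit_interval x]
  by (auto simp: measure_preserving_def unit_interval_def)

(* The extension of a measure-preserving map of [0,1] preserves Lebesgue measure on the line: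
   the preimage of B splits into the preimage of the part inside [0,1] and the part outside. *)
lemma ext_unit_preserves_lborel:
  assumes \<tau>: "\<tau> \<in> measure_preserving unit_interval unit_interval"
  shows "ext_unit \<tau> \<in> lborel \<rightarrow>\<^sub>M lborel" "distr lborel lborel (ext_unit \<tau>) = lborel"
proof -
  have preimage: "ext_unit \<tau> -` B = (\<tau> -` (B \<inter> {0..1}) \<inter> {0..1}) \<union> (B - {0..1})" for B
    using measure_preserving_range[OF \<tau>] by (auto simp: ext_unit_def split: if_splits)
  have inner_sets: "\<tau> -` (B \<inter> {0..1}) \<inter> {0..1} \<in> sets borel"
    and inner_measure: "emeasure lborel (\<tau> -` (B \<inter> {0..1}) \<inter> {0..1}) = emeasure lborel (B \<inter> {0..1})"
    if B: "B \<in> sets borel" for B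
  proof -
    have C: "B \<inter> {0..1} \<in> sets unit_interval" using B by (simp add: sets_unit_interval)
    have space: "space unit_interval = {0..1}" by (simp add: unit_interval_def)
    have emeasure_ui: "emeasure unit_interval A = emeasure lborel A" if "A \<subseteq> {0..1}" for A
      unfolding unit_interval_def using that by (intro emeasure_restrict_space) auto
    have "\<tau> -` (B \<inter> {0..1}) \<inter> space unit_interval \<in> sets unit_interval"
      using \<tau> by (intro measurable_sets[OF _ C]) (simp add: measure_preserving_def)
    thus "\<tau> -` (B \<inter> {0..1}) \<inter> {0..1} \<in> sets borel" by (simp add: sets_unit_interval space)
    have "emeasure unit_interval (\<tau> -` (B \<inter> {0..1}) \<inter> space unit_interval) = emeasure unit_interval (B \<inter> {0..1})"
      using \<tau> C by (auto simp: measure_preserving_def)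
    thus "emeasure lborel (\<tau> -` (B \<inter> {0..1}) \<inter> {0..1}) = emeasure lborel (B \<inter> {0..1})"
      by (simp add: space emeasure_ui)
  qed
  show meas: "ext_unit \<tau> \<in> lborel \<rightarrow>\<^sub>M lborel"
    by (rule measurableI) (auto simp: preimage inner_sets simp del: vimage_Int)
  show "distr lborel lborel (ext_unit \<tau>) = lborel"
  proof (rule measure_eqI)
    fix B :: "real set" assume "B \<in> sets (distr lborel lborel (ext_unit \<tau>))"
    hence B: "B \<in> sets borel" by simp
    have "emeasure (distr lborel lborel (ext_unit \<tau>)) B = emeasure lborel (ext_unit \<tau> -` B)"
      using B meas by (simp add: emeasure_distr)
    also have "\<dots> = emeasure lborel (\<tau> -` (B \<inter> {0..1}) \<inter> {0..1}) + emeasure lborel (B - {0..1})"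
      unfolding preimage using B inner_sets[OF B] by (intro plus_emeasure[symmetric]) auto
    also have "\<dots> = emeasure lborel B"
      unfolding inner_measure[OF B] using B by (subst plus_emeasure) (auto simp: Int_Diff_Un)
    finally show "emeasure (distr lborel lborel (ext_unit \<tau>)) B = emeasure lborel B" .
  qed simp
qed

(* Hence the relabelling preserves Lebesgue measure on the plane (product of image measures). *)
lemma relabel_preserves_lborel:
  assumes "\<tau> \<in> measure_preserving unit_interval unit_interval"
  shows "relabel \<tau> \<in> lborel \<rightarrow>\<^sub>M lborel" "distr lborel lborel (relabel \<tau>) = lborel"
proof -
  note ext = ext_unit_preserves_lborel[OF assms]
  have "relabel \<tau> \<in> (lborel \<Otimes>\<^sub>M lborel) \<rightarrow>\<^sub>M (lborel \<Otimes>\<^sub>M lborel)"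
    unfolding relabel_def using ext(1) by measurable
  thus meas: "relabel \<tau> \<in> lborel \<rightarrow>\<^sub>M lborel" by (simp add: lborel_prod)
  have "lborel \<Otimes>\<^sub>M lborel = distr (lborel \<Otimes>\<^sub>M lborel) (lborel \<Otimes>\<^sub>M lborel) (relabel \<tau>)"
    using pair_measure_distr[OF ext(1) ext(1)] ext(2) lborel.sigma_finite_measure_axioms
    by (simp add: relabel_def)
  thus "distr lborel lborel (relabel \<tau>) = lborel" by (simp add: lborel_prod)
qed

lemma integral_relabel:
  fixes g :: "real \<times> real \<Rightarrow> real"
  assumes "\<tau> \<in> measure_preserving unit_interval unit_interval" and [measurable]: "g \<in> borel_measurable lborel"
  shows "integral\<^sup>L lborel (\<lambda>z. g (relabel \<tau> z)) = integral\<^sup>L lborel g"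
    and "integrable lborel g \<Longrightarrow> integrable lborel (\<lambda>z. g (relabel \<tau> z))"
  using integral_distr[OF relabel_preserves_lborel(1)[OF assms(1)] assms(2)]
    integrable_distr_eq[OF relabel_preserves_lborel(1)[OF assms(1)] assms(2)]
  by (simp_all add: relabel_preserves_lborel(2)[OF assms(1)])

definition unit_sq :: "(real \<times> real) set" where
  "unit_sq = {0..1} \<times> {0..1}"

definition kernel_fun :: "(real \<Rightarrow> real \<Rightarrow> real) \<Rightarrow> real \<times> real \<Rightarrow> real" where
  "kernel_fun \<kappa> z = indicator unit_sq z * case_prod \<kappa> z"

lemma unit_sq_sets [measurable]: "unit_sq \<in> sets borel"
  unfolding unit_sq_def by (intro borel_Times) auto

lemma integrable_kernel_fun: "is_kernel \<kappa> \<Longrightarrow> integrable lborel (kernel_fun \<kappa>)"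
  unfolding is_kernel_def set_integrable_def kernel_fun_def unit_sq_def by simp

lemma kernel_fun_measurable [measurable]: "is_kernel \<kappa> \<Longrightarrow> kernel_fun \<kappa> \<in> borel_measurable lborel"
  using integrable_kernel_fun by blast

lemma kernel_fun_nonneg: "is_kernel \<kappa> \<Longrightarrow> 0 \<le> kernel_fun \<kappa> z"
  unfolding is_kernel_def kernel_fun_def unit_sq_def by (cases z) (auto simp: indicator_def)

lemma kernel_fun_relabel:
  assumes "\<tau> \<in> measure_preserving unit_interval unit_interval"
  shows "kernel_fun \<kappa> (relabel \<tau> z) = indicator unit_sq z * \<kappa> (\<tau> (fst z)) (\<tau> (snd z))"
  using measure_preserving_range[OF assms]
  by (cases z) (auto simp: kernel_fun_def relabel_def ext_unit_def unit_sq_def indicator_def)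

lemma integrable_difference_on_unit_sq:
  assumes "n > 0" "is_kernel \<kappa>" "\<tau> \<in> measure_preserving unit_interval unit_interval"
  shows "integrable lborel (\<lambda>z. indicator unit_sq z * (\<lambda>(x, y). step_kernel n A x y - \<kappa> (\<tau> x) (\<tau> y)) z)"
proof -
  have "integrable lborel (\<lambda>z. indicator unit_sq z *\<^sub>R block_fun n {1..n} A z)"
    by (intro integrable_mult_indicator integrable_block_fun assms(1)) simp
  hence "integrable lborel (\<lambda>z. indicator unit_sq z * step_kernel n A (fst z) (snd z))"
    by (simp add: step_kernel_block_fun[OF assms(1)])
  moreover have "integrable lborel (\<lambda>z. kernel_fun \<kappa> (relabel \<tau> z))"
    using integral_relabel(2)[OF assms(3)] assms(2) by (simp add: integrable_kernel_fun)
  ultimately have "integrable lborel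
      (\<lambda>z. indicator unit_sq z * step_kernel n A (fst z) (snd z) - kernel_fun \<kappa> (relabel \<tau> z))"
    by (rule Bochner_Integration.integrable_diff)
  thus ?thesis
    by (simp add: kernel_fun_relabel[OF assms(3)] case_prod_beta right_diff_distrib)
qed

(* The cut norm dominates every rectangle integral; the supremum in its definition is finite
   because all rectangle integrals are bounded by the L1 norm. *)
lemma cut_norm_ge:
  fixes W :: "real \<Rightarrow> real \<Rightarrow> real"
  assumes int: "integrable lborel (\<lambda>z. indicator unit_sq z * case_prod W z)"
    and S: "S \<in> sets borel" "S \<subseteq> {0..1}" and T: "T \<in> sets borel" "T \<subseteq> {0..1}"
  shows "\<bar>set_lebesgue_integral lborel (S \<times> T) (\<lambda>(x, y). W x y)\<bar> \<le> cut_norm W"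
proof -
  let ?B = "integral\<^sup>L lborel (\<lambda>z. \<bar>indicator unit_sq z * case_prod W z\<bar>)"
  have bound: "\<bar>set_lebesgue_integral lborel (S \<times> T) (\<lambda>(x, y). W x y)\<bar> \<le> ?B"
    if S: "S \<in> sets borel" "S \<subseteq> {0..1}" and T: "T \<in> sets borel" "T \<subseteq> {0..1}" for S T
  proof -
    have ST: "S \<times> T \<in> sets lborel" using S T by (simp add: borel_Times)
    have restrict: "indicator (S \<times> T) z * case_prod W z
        = indicator (S \<times> T) z * (indicator unit_sq z * case_prod W z)" for z
      using S(2) T(2) by (auto simp: indicator_def unit_sq_def)
    have "\<bar>integral\<^sup>L lborel (\<lambda>z. indicator (S \<times> T) z *\<^sub>R (indicator unit_sq z * case_prod W z))\<bar> \<le> ?B"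
      by (intro integral_abs_bound_integral integrable_mult_indicator ST int integrable_abs)
         (auto simp: indicator_def)
    thus ?thesis by (simp add: set_lebesgue_integral_def restrict)
  qed
  show ?thesis
    unfolding cut_norm_def using bound S T by (intro cSup_upper bdd_aboveI) auto
qed

definition kernel_tail :: "(real \<Rightarrow> real \<Rightarrow> real) \<Rightarrow> real \<Rightarrow> real \<times> real \<Rightarrow> real" where
  "kernel_tail \<kappa> M z = max (kernel_fun \<kappa> z - M * indicator unit_sq z) 0"

lemma kernel_tail_measurable [measurable]:
  "is_kernel \<kappa> \<Longrightarrow> kernel_tail \<kappa> M \<in> borel_measurable lborel"
  unfolding kernel_tail_def by measurable

lemma kernel_tail_bounds:
  "is_kernel \<kappa> \<Longrightarrow> 0 \<le> M \<Longrightarrow> 0 \<le> kernel_tail \<kappa> M z \<and> kernel_tail \<kappa> M z \<le> kernel_fun \<kappa> z"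
  using kernel_fun_nonneg[of \<kappa> z] unfolding kernel_tail_def by (auto simp: indicator_def)

lemma integrable_kernel_tail: "is_kernel \<kappa> \<Longrightarrow> 0 \<le> M \<Longrightarrow> integrable lborel (kernel_tail \<kappa> M)"
  by (rule Bochner_Integration.integrable_bound[OF integrable_kernel_fun])
     (auto simp: kernel_tail_bounds kernel_fun_nonneg)

(* By dominated convergence (dominated by the kernel itself), the tail integral tends to 0. *)
lemma kernel_tail_vanishes:
  assumes "is_kernel \<kappa>"
  shows "(\<lambda>m::nat. integral\<^sup>L lborel (kernel_tail \<kappa> (real m))) \<longlonglongrightarrow> 0"
proof -
  have pointwise: "(\<lambda>m::nat. kernel_tail \<kappa> (real m) z) \<longlonglongrightarrow> 0" for z
  proof (rule tendsto_eventually)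
    obtain N :: nat where "kernel_fun \<kappa> z \<le> real N" using real_arch_simple by blast
    hence "kernel_tail \<kappa> (real m) z = 0" if "N \<le> m" for m
      using that by (cases "z \<in> unit_sq") (auto simp: kernel_tail_def kernel_fun_def)
    thus "\<forall>\<^sub>F m in sequentially. kernel_tail \<kappa> (real m) z = 0"
      unfolding eventually_sequentially by blast
  qed
  have "(\<lambda>m::nat. integral\<^sup>L lborel (kernel_tail \<kappa> (real m))) \<longlonglongrightarrow> integral\<^sup>L lborel (\<lambda>z::real \<times> real. 0::real)"
    using assms pointwise kernel_tail_bounds[OF assms]
    by (intro integral_dominated_convergence[where w = "kernel_fun \<kappa>"] integrable_kernel_fun AE_I2) auto
  thus ?thesis by simp
qed

lemma kernel_mass_on_set:
  assumes \<kappa>: "is_kernel \<kappa>" and \<tau>: "\<tau> \<in> measure_preserving unit_interval unit_interval"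
    and V: "V \<in> sets borel" "integrable lborel (indicator V :: _ \<Rightarrow> real)" and M: "0 \<le> M"
  shows "integral\<^sup>L lborel (\<lambda>z. indicator V z * kernel_fun \<kappa> (relabel \<tau> z))
    \<le> M * integral\<^sup>L lborel (indicator V) + integral\<^sup>L lborel (kernel_tail \<kappa> M)"
proof -
  have int_tail: "integrable lborel (\<lambda>z. kernel_tail \<kappa> M (relabel \<tau> z))"
    using \<kappa> M by (intro integral_relabel(2)[OF \<tau>] integrable_kernel_tail) auto
  have int_mass: "integrable lborel (\<lambda>z. indicator V z * kernel_fun \<kappa> (relabel \<tau> z))"
    using integrable_mult_indicator[OF _ integral_relabel(2)[OF \<tau> _ integrable_kernel_fun[OF \<kappa>]]] V \<kappa>
    by simp
  have "kernel_fun \<kappa> w \<le> M + kernel_tail \<kappa> M w" for w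
    using M by (auto simp: kernel_tail_def kernel_fun_def indicator_def)
  hence pointwise: "indicator V z * kernel_fun \<kappa> (relabel \<tau> z) \<le> M * indicator V z + kernel_tail \<kappa> M (relabel \<tau> z)" for z
    using kernel_tail_bounds[OF \<kappa> M] by (auto simp: indicator_def)
  have "integral\<^sup>L lborel (\<lambda>z. indicator V z * kernel_fun \<kappa> (relabel \<tau> z))
      \<le> integral\<^sup>L lborel (\<lambda>z. M * indicator V z + kernel_tail \<kappa> M (relabel \<tau> z))"
    using int_mass int_tail V pointwise by (intro integral_mono) auto
  also have "\<dots> = M * integral\<^sup>L lborel (indicator V) + integral\<^sup>L lborel (kernel_tail \<kappa> M)"
    using int_tail V \<kappa> by (simp add: integral_relabel(1)[OF \<tau>])
  finally show ?thesis .
qed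

(* Integrals over the strip of S of functions integrable on the square are bounded by the cut
   norm, since the strip is a rectangle. *)
lemma strip_subset_unit_sq: "n > 0 \<Longrightarrow> S \<subseteq> {1..n} \<Longrightarrow> strip n S \<subseteq> unit_sq"
  using cells_subset_unit unfolding strip_def unit_sq_def by (intro Sigma_mono) auto

lemma integrable_restrict_unit_sq:
  fixes f :: "real \<times> real \<Rightarrow> real"
  assumes "V \<in> sets borel" "V \<subseteq> unit_sq" "integrable lborel (\<lambda>z. indicator unit_sq z * f z)"
  shows "integrable lborel (\<lambda>z. indicator V z * f z)"
proof -
  have "integrable lborel (\<lambda>z. indicator V z *\<^sub>R (indicator unit_sq z * f z))"
    using assms by (intro integrable_mult_indicator) auto
  moreover have "(\<lambda>z. indicator V z *\<^sub>R (indicator unit_sq z * f z)) = (\<lambda>z. indicator V z * f z)"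
    using assms(2) by (auto simp: indicator_def fun_eq_iff)
  ultimately show ?thesis by metis
qed

lemma integral_strip_le_cut_norm:
  fixes W :: "real \<Rightarrow> real \<Rightarrow> real"
  assumes n: "n > 0" and S: "S \<subseteq> {1..n}"
    and int: "integrable lborel (\<lambda>z. indicator unit_sq z * case_prod W z)"
  shows "integral\<^sup>L lborel (\<lambda>z. indicator (strip n S) z * case_prod W z) \<le> cut_norm W"
proof -
  have "integral\<^sup>L lborel (\<lambda>z. indicator (strip n S) z * case_prod W z)
      = set_lebesgue_integral lborel (cells n S \<times> {0<..1}) (\<lambda>(x, y). W x y)"
    by (simp add: set_lebesgue_integral_def strip_def)
  also have "\<dots> \<le> cut_norm W"
    using cells_subset_unit[OF n S] finite_subset[OF S]
    by (intro order.trans[OF abs_ge_self cut_norm_ge[OF int]]) auto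
  finally show ?thesis .
qed

lemma row_sums_le_cut_norm:
  assumes n: "n > 0" and S: "S \<subseteq> {1..n}" and \<kappa>: "is_kernel \<kappa>"
    and \<tau>: "\<tau> \<in> measure_preserving unit_interval unit_interval" and M: "0 \<le> M"
  shows "(\<Sum>i\<in>S. \<Sum>j\<in>{1..n}. A i j) / real n ^ 2
    \<le> cut_norm (\<lambda>x y. step_kernel n A x y - \<kappa> (\<tau> x) (\<tau> y)) + M * real (card S) / real n
       + integral\<^sup>L lborel (kernel_tail \<kappa> M)"
proof -
  define W where "W = (\<lambda>x y. step_kernel n A x y - \<kappa> (\<tau> x) (\<tau> y))"
  have strip_measurable: "strip n S \<in> sets borel" using finite_subset[OF S] by simp
  have int_sq: "integrable lborel (\<lambda>z. indicator unit_sq z * case_prod W z)"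
    unfolding W_def by (rule integrable_difference_on_unit_sq[OF n \<kappa> \<tau>])
  have int_W: "integrable lborel (\<lambda>z. indicator (strip n S) z * case_prod W z)"
    by (rule integrable_restrict_unit_sq[OF strip_measurable strip_subset_unit_sq[OF n S] int_sq])
  have int_K: "integrable lborel (\<lambda>z. indicator (strip n S) z * kernel_fun \<kappa> (relabel \<tau> z))"
    using integrable_mult_indicator[OF _ integral_relabel(2)[OF \<tau> _ integrable_kernel_fun[OF \<kappa>]]]
      strip_measurable \<kappa> by simp
  have split: "indicator (strip n S) z * step_kernel n A (fst z) (snd z)
      = indicator (strip n S) z * case_prod W z + indicator (strip n S) z * kernel_fun \<kappa> (relabel \<tau> z)" for z
    using strip_subset_unit_sq[OF n S]
    by (cases "z \<in> strip n S") (auto simp: W_def kernel_fun_relabel[OF \<tau>] case_prod_beta)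
  have "(\<Sum>i\<in>S. \<Sum>j\<in>{1..n}. A i j) / real n ^ 2
      = integral\<^sup>L lborel (\<lambda>z. indicator (strip n S) z * step_kernel n A (fst z) (snd z))"
    by (rule integral_step_kernel_on_strip[OF n S, symmetric])
  also have "\<dots> = integral\<^sup>L lborel (\<lambda>z. indicator (strip n S) z * case_prod W z)
      + integral\<^sup>L lborel (\<lambda>z. indicator (strip n S) z * kernel_fun \<kappa> (relabel \<tau> z))"
    unfolding split by (rule Bochner_Integration.integral_add[OF int_W int_K])
  also have "\<dots> \<le> cut_norm W + (M * (real (card S) / real n) + integral\<^sup>L lborel (kernel_tail \<kappa> M))"
    using integral_strip_le_cut_norm[OF n S int_sq]
      kernel_mass_on_set[OF \<kappa> \<tau> strip_measurable integrable_indicator_strip[OF n S] M]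
    unfolding integral_indicator_strip[OF n S] by (rule add_mono)
  finally show ?thesis by (simp add: W_def)
qed

(* Chernoff bound for a sum of independent Bernoulli variables, via the exponential moment
   E exp X = prod (1 + (e - 1) q_i) <= exp ((e - 1) sum q_i) and Markov's inequality. *)
lemma Pi_bernoulli_chernoff:
  fixes q :: "'a \<Rightarrow> real"
  assumes I: "finite I" and P: "P \<subseteq> I" and q: "\<And>i. i \<in> I \<Longrightarrow> 0 \<le> q i \<and> q i \<le> 1"
  shows "measure_pmf.prob (Pi_pmf I False (\<lambda>i. bernoulli_pmf (q i))) {e. a \<le> real (card {i\<in>P. e i})}
    \<le> exp ((exp 1 - 1) * (\<Sum>i\<in>P. q i) - a)"
proof -
  let ?G = "Pi_pmf I False (\<lambda>i. bernoulli_pmf (q i))"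
  define f where "f = (\<lambda>i (v::bool). if i \<in> P \<and> v then exp 1 else (1::real))"
  have f_int: "integrable (measure_pmf (bernoulli_pmf (q i))) (f i)" for i
    by (rule integrable_measure_pmf_finite) (rule finite_subset[OF subset_UNIV], simp)
  have count: "exp (real (card {i\<in>P. e i})) = (\<Prod>i\<in>I. f i (e i))" for e
  proof -
    have "I \<inter> {i. i \<in> P \<and> e i} = {i\<in>P. e i}" using P by auto
    hence "(\<Prod>i\<in>I. f i (e i)) = exp 1 ^ card {i\<in>P. e i}"
      unfolding f_def by (simp add: prod.If_cases I)
    thus ?thesis by (simp add: exp_of_nat_mult[symmetric])
  qed
  have factor: "measure_pmf.expectation (bernoulli_pmf (q i)) (f i)
      \<le> (if i \<in> P then exp ((exp 1 - 1) * q i) else 1)" if "i \<in> I" for i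
  proof -
    have "measure_pmf.expectation (bernoulli_pmf (q i)) (f i)
        = (if i \<in> P then 1 + (exp 1 - 1) * q i else 1)"
      using q[OF that] by (simp add: f_def algebra_simps)
    thus ?thesis by (simp add: add.commute exp_ge_add_one_self)
  qed
  have "measure_pmf.expectation ?G (\<lambda>e. \<Prod>i\<in>I. f i (e i))
      = (\<Prod>i\<in>I. measure_pmf.expectation (bernoulli_pmf (q i)) (f i))"
    using I f_int by (intro expectation_prod_Pi_pmf) (auto simp: f_def)
  also have "\<dots> \<le> (\<Prod>i\<in>I. if i \<in> P then exp ((exp 1 - 1) * q i) else 1)"
    using factor q by (intro prod_mono conjI integral_nonneg_AE AE_pmfI) (auto simp: f_def)
  also have "\<dots> = exp ((exp 1 - 1) * (\<Sum>i\<in>P. q i))"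
    using P I finite_subset[OF P I] by (simp add: prod.If_cases Int_absorb1 exp_sum sum_distrib_left)
  finally have moment: "measure_pmf.expectation ?G (\<lambda>e. \<Prod>i\<in>I. f i (e i))
      \<le> exp ((exp 1 - 1) * (\<Sum>i\<in>P. q i))" .
  have "{e. a \<le> real (card {i\<in>P. e i})} = {e \<in> space ?G. exp a \<le> (\<Prod>i\<in>I. f i (e i))}"
    by (auto simp: count[symmetric])
  hence "measure_pmf.prob ?G {e. a \<le> real (card {i\<in>P. e i})}
      \<le> measure_pmf.expectation ?G (\<lambda>e. \<Prod>i\<in>I. f i (e i)) / exp a"
    using I f_int by (simp only:) (intro integral_Markov_inequality_measure integrable_prod_Pi_pmf
      AE_pmfI prod_nonneg, auto simp: f_def)
  also have "\<dots> \<le> exp ((exp 1 - 1) * (\<Sum>i\<in>P. q i)) / exp a"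
    by (intro divide_right_mono moment) simp
  finally show ?thesis by (simp add: exp_diff)
qed

definition pairs_met :: "nat \<Rightarrow> nat set \<Rightarrow> (nat \<times> nat) set" where
  "pairs_met n S = {p \<in> vpairs n. fst p \<in> S \<or> snd p \<in> S}"

definition edge_prob :: "nat \<Rightarrow> (nat \<Rightarrow> nat \<Rightarrow> real) \<Rightarrow> nat \<times> nat \<Rightarrow> real" where
  "edge_prob n A p = min (A (fst p) (snd p) / real n) 1"

lemma finite_vpairs [simp]: "finite (vpairs n)"
  by (rule finite_subset[of _ "{1..n} \<times> {1..n}"]) (auto simp: vpairs_def)

lemma edges_met_tail:
  assumes A: "\<forall>i\<in>{1..n}. \<forall>j\<in>{1..n}. 0 \<le> A i j"
  shows "measure_pmf.prob (rand_graph n A) {e. a \<le> real (edges_met n e S)}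
    \<le> exp ((exp 1 - 1) * (\<Sum>p\<in>pairs_met n S. edge_prob n A p) - a)"
proof -
  have "(\<lambda>(i, j). bernoulli_pmf (min (A i j / real n) 1)) = (\<lambda>p. bernoulli_pmf (edge_prob n A p))"
    by (auto simp: fun_eq_iff edge_prob_def)
  hence "rand_graph n A = Pi_pmf (vpairs n) False (\<lambda>p. bernoulli_pmf (edge_prob n A p))"
    unfolding rand_graph_def by simp
  moreover have "edges_met n e S = card {p \<in> pairs_met n S. e p}" for e
    unfolding edges_met_def pairs_met_def by (rule arg_cong[where f = card]) auto
  moreover have "0 \<le> edge_prob n A p \<and> edge_prob n A p \<le> 1" if "p \<in> vpairs n" for p
    using that A by (auto simp: edge_prob_def vpairs_def)
  ultimately show ?thesis
    by (simp only:) (rule Pi_bernoulli_chernoff, auto simp: pairs_met_def)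
qed

(* The expected number of edges met by S is at most the row sums of S divided by n: orient each
   such pair so that its first coordinate lies in S, which is injective by symmetry of A. *)
lemma expected_edges_met_le:
  assumes n: "n > 0" and S: "S \<subseteq> {1..n}"
    and A: "\<forall>i\<in>{1..n}. \<forall>j\<in>{1..n}. 0 \<le> A i j \<and> A i j = A j i"
  shows "(\<Sum>p\<in>pairs_met n S. edge_prob n A p) \<le> (\<Sum>i\<in>S. \<Sum>j\<in>{1..n}. A i j) / real n"
proof -
  define h where "h = (\<lambda>(i, j). if i \<in> S then (i, j) else (j, i :: nat))"
  have inj: "inj_on h (pairs_met n S)"
    by (auto simp: inj_on_def h_def pairs_met_def vpairs_def split: if_splits)
  have h_into: "h ` pairs_met n S \<subseteq> S \<times> {1..n}"
    by (auto simp: h_def pairs_met_def vpairs_def split: if_splits)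
  have sym: "A (fst p) (snd p) = case_prod A (h p)" if "p \<in> pairs_met n S" for p
    using that A by (auto simp: h_def pairs_met_def vpairs_def)
  have "(\<Sum>p\<in>pairs_met n S. edge_prob n A p) \<le> (\<Sum>p\<in>pairs_met n S. A (fst p) (snd p) / real n)"
    by (intro sum_mono) (simp add: edge_prob_def)
  also have "\<dots> = (\<Sum>p\<in>h ` pairs_met n S. case_prod A p) / real n"
    by (simp add: sum_divide_distrib sum.reindex[OF inj] sym)
  also have "\<dots> \<le> (\<Sum>p\<in>S \<times> {1..n}. case_prod A p) / real n"
    using h_into S A finite_subset[OF S] by (intro divide_right_mono sum_mono2) auto
  also have "\<dots> = (\<Sum>i\<in>S. \<Sum>j\<in>{1..n}. A i j) / real n"
    by (simp add: sum.cartesian_product)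
  finally show ?thesis .
qed

(* Counting small subsets by the generating function sum over T of t^|T| = (1 + t)^|X|. *)
lemma card_small_subsets:
  fixes t k :: real
  assumes X: "finite X" and t: "0 < t" "t \<le> 1"
  shows "real (card {S. S \<subseteq> X \<and> real (card S) \<le> k}) \<le> (1 + t) ^ card X * exp (- k * ln t)"
proof -
  let ?F = "{S. S \<subseteq> X \<and> real (card S) \<le> k}"
  have weight: "1 \<le> t ^ card S * exp (- k * ln t)" if "S \<in> ?F" for S
  proof -
    have "0 \<le> (real (card S) - k) * ln t"
      using that t by (intro mult_nonpos_nonpos) auto
    also have "\<dots> = ln (t ^ card S * exp (- k * ln t))"
      using t by (simp add: ln_mult ln_realpow algebra_simps)
    finally show ?thesis using t by simp
  qed
  have "real (card ?F) = (\<Sum>S\<in>?F. 1)" by simp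
  also have "\<dots> \<le> (\<Sum>S\<in>Pow X. t ^ card S * exp (- k * ln t))"
    using X t weight by (intro order.trans[OF sum_mono sum_mono2]) auto
  also have "\<dots> = (1 + t) ^ card X * exp (- k * ln t)"
  proof -
    have "(\<Sum>S\<in>Pow X. t ^ card S) = (1 + t) ^ card X"
      using prod_add[OF X, of "\<lambda>_. t" "\<lambda>_. 1"] by (simp add: add.commute)
    thus ?thesis by (simp add: sum_distrib_right[symmetric])
  qed
  finally show ?thesis .
qed

(* The infimum defining the cut distance is over a nonempty set, so a relabelling nearly
   attaining it exists. *)
lemma mp_bij_id: "mp_bij (\<lambda>x. x)"
proof -
  have space: "space unit_interval = {0..1}" by (simp add: unit_interval_def)
  have inv: "inv_into {0..1} (\<lambda>x. x) x = x" if "x \<in> {0..1::real}" for x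
    using that by (simp add: inv_into_f_f)
  have "(\<lambda>x. x) \<in> measure_preserving unit_interval unit_interval"
    unfolding measure_preserving_def using sets.sets_into_space by (auto simp: Int_absorb2)
  moreover have "inv_into {0..1} (\<lambda>x. x) \<in> measure_preserving unit_interval unit_interval"
  proof -
    have "inv_into {0..1} (\<lambda>x. x) \<in> unit_interval \<rightarrow>\<^sub>M unit_interval"
      using measurable_ident by (subst measurable_cong[where g = "\<lambda>x. x"]) (auto simp: space inv)
    moreover have "inv_into {0..1} (\<lambda>x. x) -` B \<inter> space unit_interval = B" if "B \<in> sets unit_interval" for B
      using that inv by (auto simp: space sets_unit_interval)
    ultimately show ?thesis unfolding measure_preserving_def by auto
  qed
  ultimately show ?thesis unfolding mp_bij_def by (simp add: bij_betw_id[unfolded id_def])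
qed

lemma cut_dist_witness:
  assumes "cut_dist n A \<kappa> < c"
  obtains \<tau> where "\<tau> \<in> measure_preserving unit_interval unit_interval"
    "cut_norm (\<lambda>x y. step_kernel n A x y - \<kappa> (\<tau> x) (\<tau> y)) < c"
proof -
  have "{cut_norm (\<lambda>x y. step_kernel n A x y - \<kappa> (\<tau> x) (\<tau> y)) | \<tau>. mp_bij \<tau>} \<noteq> {}"
    using mp_bij_id by blast
  from cInf_lessD[OF this assms[unfolded cut_dist_def]] that show ?thesis
    by (auto simp: mp_bij_def)
qed

(* With t and gamma small compared to delta, there are few enough sets of size at most gamma n for
   a union bound against the Chernoff tail exp (- delta n / 2). *)
lemma few_small_sets:
  fixes \<delta> \<gamma> t :: real
  assumes t: "0 < t" "t \<le> 1" "t \<le> \<delta> / 8" and \<gamma>: "\<gamma> * (- ln t) \<le> \<delta> / 8"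
  shows "real (card {S. S \<subseteq> {1..n} \<and> real (card S) \<le> \<gamma> * real n}) * exp (- (\<delta> / 2) * real n)
    \<le> exp (- (\<delta> / 4) * real n)"
proof -
  have "real (card {S. S \<subseteq> {1..n} \<and> real (card S) \<le> \<gamma> * real n}) * exp (- (\<delta> / 2) * real n)
      \<le> (1 + t) ^ n * exp (- (\<gamma> * real n) * ln t) * exp (- (\<delta> / 2) * real n)"
    using card_small_subsets[of "{1..n}" t "\<gamma> * real n"] t by (intro mult_right_mono) auto
  also have "\<dots> \<le> exp (t * real n) * exp (\<delta> / 8 * real n) * exp (- (\<delta> / 2) * real n)"
  proof -
    have "(1 + t) ^ n \<le> exp t ^ n"
      using t by (intro power_mono) (auto simp: add.commute exp_ge_add_one_self)
    hence "(1 + t) ^ n \<le> exp (t * real n)" by (simp add: exp_of_nat_mult[symmetric] mult.commute)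
    moreover have "- (\<gamma> * real n) * ln t \<le> \<delta> / 8 * real n"
      using mult_right_mono[OF \<gamma>, of "real n"] by (simp add: algebra_simps)
    ultimately show ?thesis by (intro mult_mono) auto
  qed
  also have "\<dots> \<le> exp (- (\<delta> / 4) * real n)"
    using mult_right_mono[OF t(3), of "real n"] by (simp add: exp_add[symmetric] algebra_simps)
  finally show ?thesis .
qed

lemma small_sets_sparse_whp:
  fixes \<delta> \<gamma> t :: real
  assumes n: "n > 0" and A: "\<forall>i\<in>{1..n}. \<forall>j\<in>{1..n}. 0 \<le> A i j"
    and t: "0 < t" "t \<le> 1" "t \<le> \<delta> / 8" and \<gamma>: "\<gamma> * (- ln t) \<le> \<delta> / 8"
    and mean: "\<And>S. S \<subseteq> {1..n} \<Longrightarrow> real (card S) \<le> \<gamma> * real n \<Longrightarrow>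
      (\<Sum>p\<in>pairs_met n S. edge_prob n A p) \<le> \<delta> * real n / 4"
  shows "1 - exp (- (\<delta> / 4) * real n) \<le> measure_pmf.prob (rand_graph n A)
    {e. \<forall>S \<subseteq> {1..n}. real (card S) \<le> \<gamma> * real n \<longrightarrow> real (edges_met n e S) \<le> \<delta> * real n}"
    (is "_ \<le> measure_pmf.prob _ ?Good")
proof -
  let ?G = "rand_graph n A"
  define F where "F = {S. S \<subseteq> {1..n} \<and> real (card S) \<le> \<gamma> * real n}"
  define Bad where "Bad = (\<Union>S\<in>F. {e. \<delta> * real n \<le> real (edges_met n e S)})"
  have finite_F: "finite F" unfolding F_def by (rule finite_subset[of _ "Pow {1..n}"]) auto
  have tail_S: "measure_pmf.prob ?G {e. \<delta> * real n \<le> real (edges_met n e S)} \<le> exp (- (\<delta> / 2) * real n)"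
    if "S \<in> F" for S
  proof -
    have "0 \<le> (\<Sum>p\<in>pairs_met n S. edge_prob n A p)"
      using A by (intro sum_nonneg) (auto simp: edge_prob_def pairs_met_def vpairs_def)
    hence "(exp 1 - 1) * (\<Sum>p\<in>pairs_met n S. edge_prob n A p) \<le> 2 * (\<delta> * real n / 4)"
      using exp_le mean[of S] that unfolding F_def by (intro mult_mono) auto
    hence "(exp 1 - 1) * (\<Sum>p\<in>pairs_met n S. edge_prob n A p) - \<delta> * real n \<le> - (\<delta> / 2) * real n"
      by linarith
    thus ?thesis using edges_met_tail[OF A, of "\<delta> * real n" S] by (meson exp_le_cancel_iff order_trans)
  qed
  have "measure_pmf.prob ?G Bad \<le> (\<Sum>S\<in>F. measure_pmf.prob ?G {e. \<delta> * real n \<le> real (edges_met n e S)})"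
    unfolding Bad_def by (rule measure_pmf.finite_measure_subadditive_finite[OF finite_F]) auto
  also have "\<dots> \<le> real (card F) * exp (- (\<delta> / 2) * real n)"
    using sum_mono[OF tail_S] by simp
  also have "\<dots> \<le> exp (- (\<delta> / 4) * real n)"
    unfolding F_def by (rule few_small_sets[OF t \<gamma>])
  finally have "measure_pmf.prob ?G Bad \<le> exp (- (\<delta> / 4) * real n)" .
  moreover have Good_sub: "space ?G - Bad \<subseteq> ?Good"
  proof
    fix e assume "e \<in> space ?G - Bad"
    hence "real (edges_met n e S) < \<delta> * real n" if "S \<in> F" for S
      using that unfolding Bad_def by (simp add: not_le)
    thus "e \<in> ?Good" unfolding F_def by (simp add: less_imp_le)
  qed
  hence "1 - measure_pmf.prob ?G Bad \<le> measure_pmf.prob ?G ?Good"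
    using measure_pmf.finite_measure_mono[OF Good_sub, of ?G] measure_pmf.prob_compl[of Bad ?G] by simp
  ultimately show ?thesis by linarith
qed

lemma sparse_whp_close_to_kernel:
  fixes \<delta> \<gamma> t M :: real
  assumes n: "n > 0" and \<kappa>: "is_kernel \<kappa>"
    and A: "\<forall>i\<in>{1..n}. \<forall>j\<in>{1..n}. 0 \<le> A i j \<and> A i j = A j i" and close: "cut_dist n A \<kappa> < \<delta> / 12"
    and M: "0 \<le> M" "integral\<^sup>L lborel (kernel_tail \<kappa> M) < \<delta> / 12"
    and t: "0 < t" "t \<le> 1" "t \<le> \<delta> / 8" and \<gamma>: "\<gamma> * M \<le> \<delta> / 12" "\<gamma> * (- ln t) \<le> \<delta> / 8"
  shows "1 - exp (- (\<delta> / 4) * real n) \<le> measure_pmf.prob (rand_graph n A)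
    {e. \<forall>S \<subseteq> {1..n}. real (card S) \<le> \<gamma> * real n \<longrightarrow> real (edges_met n e S) \<le> \<delta> * real n}"
proof -
  obtain \<tau> where \<tau>: "\<tau> \<in> measure_preserving unit_interval unit_interval"
    and cut: "cut_norm (\<lambda>x y. step_kernel n A x y - \<kappa> (\<tau> x) (\<tau> y)) < \<delta> / 12"
    using cut_dist_witness[OF close] by blast
  show ?thesis
  proof (rule small_sets_sparse_whp[OF n _ t \<gamma>(2)])
    show "\<forall>i\<in>{1..n}. \<forall>j\<in>{1..n}. 0 \<le> A i j" using A by blast
    fix S assume S: "S \<subseteq> {1..n}" "real (card S) \<le> \<gamma> * real n"
    have "M * real (card S) / real n \<le> M * \<gamma>"
      using S(2) n M(1) by (simp add: divide_le_eq mult_left_mono mult.assoc)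
    hence "(\<Sum>i\<in>S. \<Sum>j\<in>{1..n}. A i j) / real n ^ 2 \<le> \<delta> / 4"
      using row_sums_le_cut_norm[OF n S(1) \<kappa> \<tau> M(1), of A] cut M(2) \<gamma>(1) by (simp add: mult.commute)
    hence "(\<Sum>i\<in>S. \<Sum>j\<in>{1..n}. A i j) / real n \<le> \<delta> * real n / 4"
      using n by (simp add: power2_eq_square field_simps)
    thus "(\<Sum>p\<in>pairs_met n S. edge_prob n A p) \<le> \<delta> * real n / 4"
      using expected_edges_met_le[OF n S(1) A] by linarith
  qed
qed

lemma sparsity_parameters:
  fixes \<delta> :: real
  assumes \<kappa>: "is_kernel \<kappa>" and \<delta>: "\<delta> > 0"
  obtains M t \<gamma> :: real where "0 \<le> M" "integral\<^sup>L lborel (kernel_tail \<kappa> M) < \<delta> / 12"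
    and "0 < t" "t \<le> 1" "t \<le> \<delta> / 8"
    and "0 < \<gamma>" "\<gamma> * M \<le> \<delta> / 12" "\<gamma> * (- ln t) \<le> \<delta> / 8"
proof -
  obtain m :: nat where m: "integral\<^sup>L lborel (kernel_tail \<kappa> (real m)) < \<delta> / 12"
    using order_tendstoD(2)[OF kernel_tail_vanishes[OF \<kappa>], of "\<delta> / 12"] \<delta>
    by (auto simp: eventually_sequentially)
  define t where "t = min (\<delta> / 8) (1 / 2)"
  have t: "0 < t" "t < 1" "t \<le> \<delta> / 8" using \<delta> by (auto simp: t_def)
  hence ln_t: "0 < - ln t" by simp
  define \<gamma> where "\<gamma> = min (\<delta> / (12 * (real m + 1))) (\<delta> / (8 * (- ln t)))"
  have "0 < \<delta> / (12 * (real m + 1))" "0 < \<delta> / (8 * (- ln t))"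
    using \<delta> ln_t by (intro divide_pos_pos; simp)+
  hence "0 < \<gamma>" by (simp add: \<gamma>_def)
  moreover have "\<gamma> * real m \<le> \<delta> / 12"
  proof -
    have "\<gamma> * real m \<le> \<delta> / (12 * (real m + 1)) * real m"
      by (intro mult_right_mono) (auto simp: \<gamma>_def)
    also have "\<dots> \<le> \<delta> / 12" using \<delta> by (simp add: field_simps)
    finally show ?thesis .
  qed
  moreover have "\<gamma> * (- ln t) \<le> \<delta> / 8"
  proof -
    have "\<gamma> * (- ln t) \<le> \<delta> / (8 * (- ln t)) * (- ln t)"
      using ln_t by (intro mult_right_mono) (auto simp: \<gamma>_def)
    also have "\<dots> = \<delta> / 8" using ln_t by simp
    finally show ?thesis .
  qed
  ultimately show ?thesis using that[of "real m" t \<gamma>] m t by simp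
qed

theorem mainTheorem19:
  fixes \<kappa> :: "real \<Rightarrow> real \<Rightarrow> real" and \<delta> :: real
  assumes "is_kernel \<kappa>" and "\<delta> > 0"
  shows "\<exists>\<gamma>>0. \<forall>A :: nat \<Rightarrow> nat \<Rightarrow> nat \<Rightarrow> real.
    (\<forall>n. \<forall>i\<in>{1..n}. \<forall>j\<in>{1..n}. 0 \<le> A n i j \<and> A n i j = A n j i) \<longrightarrow>
    (\<lambda>n. cut_dist n (A n) \<kappa>) \<longlonglongrightarrow> 0 \<longrightarrow>
    (\<lambda>n. measure_pmf.prob (rand_graph n (A n))
        {e. \<forall>S \<subseteq> {1..n}. real (card S) \<le> \<gamma> * real n \<longrightarrow>
              real (edges_met n e S) \<le> \<delta> * real n}) \<longlonglongrightarrow> 1"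
proof -
  obtain M t \<gamma> where M: "0 \<le> M" "integral\<^sup>L lborel (kernel_tail \<kappa> M) < \<delta> / 12"
    and t: "0 < t" "t \<le> 1" "t \<le> \<delta> / 8" and \<gamma>: "0 < \<gamma>" "\<gamma> * M \<le> \<delta> / 12" "\<gamma> * (- ln t) \<le> \<delta> / 8"
    using sparsity_parameters[OF assms] .
  show ?thesis
  proof (intro exI[of _ \<gamma>] conjI allI impI \<gamma>(1))
    fix A :: "nat \<Rightarrow> nat \<Rightarrow> nat \<Rightarrow> real"
    assume A: "\<forall>n. \<forall>i\<in>{1..n}. \<forall>j\<in>{1..n}. 0 \<le> A n i j \<and> A n i j = A n j i"
      and conv: "(\<lambda>n. cut_dist n (A n) \<kappa>) \<longlonglongrightarrow> 0"
    let ?P = "\<lambda>n. measure_pmf.prob (rand_graph n (A n))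
      {e. \<forall>S \<subseteq> {1..n}. real (card S) \<le> \<gamma> * real n \<longrightarrow> real (edges_met n e S) \<le> \<delta> * real n}"
    have "\<forall>\<^sub>F n in sequentially. cut_dist n (A n) \<kappa> < \<delta> / 12"
      using order_tendstoD(2)[OF conv, of "\<delta> / 12"] assms(2) by simp
    hence "\<forall>\<^sub>F n in sequentially. 1 - exp (- (\<delta> / 4) * real n) \<le> ?P n"
      using eventually_gt_at_top[of 0]
      by eventually_elim (use sparse_whp_close_to_kernel[OF _ assms(1) _ _ M t \<gamma>(2,3)] A in auto)
    moreover have "\<forall>\<^sub>F n in sequentially. ?P n \<le> 1"
      by (simp add: measure_pmf.prob_le_1)
    moreover have "(\<lambda>n. 1 - exp (- (\<delta> / 4) * real n)) \<longlonglongrightarrow> 1"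
      using assms(2) by real_asymp
    ultimately show "?P \<longlonglongrightarrow> 1"
      by (rule tendsto_sandwich[OF _ _ _ tendsto_const])
  qed
qed

end
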